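(* (Expressiveness.) The assertion language of IPPL is expressive: for every command $c$ and every assertion $B$ there is an assertion $w[\![c,B]\!]$ such that for every interpretation $I$, $\{\sigma\mid \sigma\models^I w[\![c,B]\!]\}=wp^I[\![c,B]\!]$.
   Context: IPPL: let $\mathbf{Loc}$ be a set of locations $X$, $\mathbf{Intvar}$ a set of integer variables $i$; states are $\sigma:\mathbf{Loc}\to\mathbb{Z}$, interpretations are $I:\mathbf{Intvar}\to\mathbb{Z}$. Arithmetic expressions $a::=n\mid X\mid i\mid a_0+a_1\mid a_0-a_1\mid a_0\times a_1$; Boolean expressions $b::=\mathbf{true}\mid\mathbf{false}\mid a_0=a_1\mid a_0\leq a_1\mid\neg b\mid b_0\wedge b_1\mid b_0\vee b_1$; assertions $A::=\mathbf{true}\mid\mathbf{false}\mid a_0=a_1\mid a_0\leq a_1\mid\neg A\mid A_0\wedge A_1\mid A_0\vee A_1\mid A_0\Rightarrow A_1\mid\forall i.A\mid\exists i.A$, with the usual satisfaction relation $\sigma\models^I A$. Commands: $c::=\mathbf{skip}\mid X:=a\mid c_0;c_1\mid\mathbf{if}\ b\ \mathbf{then}\ c_0\ \mathbf{else}\ c_1\mid\mathbf{while}\ b\ \mathbf{do}\ c\mid c_0\parallel c_1$ (expressions in commands contain no integer variables). Execution $\langle c,\sigma\rangle\rightarrow\sigma'$ is the least relation closed under the standard big-step rules for skip, assignment ($\sigma[X\mapsto$ value of $a$ in $\sigma]$), sequencing, conditional and while loop, together with: if there are states $\sigma'',\sigma'''$ with $\langle c_0,\sigma\rangle\rightarrow\sigma''$,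 $\langle c_1,\sigma''\rangle\rightarrow\sigma'$, $\langle c_1,\sigma\rangle\rightarrow\sigma'''$ and $\langle c_0,\sigma'''\rangle\rightarrow\sigma'$ then $\langle c_0\parallel c_1,\sigma\rangle\rightarrow\sigma'$. The weakest precondition is $wp^I[\![c,B]\!]=\{\sigma\mid$ for all $\sigma'$, if $\langle c,\sigma\rangle\rightarrow\sigma'$ then $\sigma'\models^I B\}$. *)

theory Defs
  imports Main
begin

type_synonym loc = string
type_synonym intvar = string
type_synonym state = "loc \<Rightarrow> int"
type_synonym interp = "intvar \<Rightarrow> int"

datatype aexp = N int | L loc | IV intvar
  | Plus aexp aexp | Minus aexp aexp | Times aexp aexp

datatype caexp = CN int | CL loc
  | CPlus caexp caexp | CMinus caexp caexp | CTimes caexp caexp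

datatype cbexp = CTrue | CFalse | CEq caexp caexp | CLe caexp caexp
  | CNot cbexp | CAnd cbexp cbexp | COr cbexp cbexp

datatype assn = ATrue | AFalse | AEq aexp aexp | ALe aexp aexp
  | ANot assn | AAnd assn assn | AOr assn assn | AImp assn assn
  | AForall intvar assn | AExists intvar assn

datatype com = Skip | Assign loc caexp | Seq com com
  | If cbexp com com | While cbexp com | Par com com

fun aval :: "aexp \<Rightarrow> state \<Rightarrow> interp \<Rightarrow> int" where
  "aval (N n) \<sigma> I = n"
| "aval (L X) \<sigma> I = \<sigma> X"
| "aval (IV i) \<sigma> I = I i"
| "aval (Plus a0 a1) \<sigma> I = aval a0 \<sigma> I + aval a1 \<sigma> I"
| "aval (Minus a0 a1) \<sigma> I = aval a0 \<sigma> I - aval a1 \<sigma> I"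
| "aval (Times a0 a1) \<sigma> I = aval a0 \<sigma> I * aval a1 \<sigma> I"

fun caval :: "caexp \<Rightarrow> state \<Rightarrow> int" where
  "caval (CN n) \<sigma> = n"
| "caval (CL X) \<sigma> = \<sigma> X"
| "caval (CPlus a0 a1) \<sigma> = caval a0 \<sigma> + caval a1 \<sigma>"
| "caval (CMinus a0 a1) \<sigma> = caval a0 \<sigma> - caval a1 \<sigma>"
| "caval (CTimes a0 a1) \<sigma> = caval a0 \<sigma> * caval a1 \<sigma>"

fun cbval :: "cbexp \<Rightarrow> state \<Rightarrow> bool" where
  "cbval CTrue \<sigma> = True"
| "cbval CFalse \<sigma> = False"
| "cbval (CEq a0 a1) \<sigma> = (caval a0 \<sigma> = caval a1 \<sigma>)"
| "cbval (CLe a0 a1) \<sigma> = (caval a0 \<sigma> \<le> caval a1 \<sigma>)"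
| "cbval (CNot b) \<sigma> = (\<not> cbval b \<sigma>)"
| "cbval (CAnd b0 b1) \<sigma> = (cbval b0 \<sigma> \<and> cbval b1 \<sigma>)"
| "cbval (COr b0 b1) \<sigma> = (cbval b0 \<sigma> \<or> cbval b1 \<sigma>)"

fun sat :: "state \<Rightarrow> interp \<Rightarrow> assn \<Rightarrow> bool" where
  "sat \<sigma> I ATrue = True"
| "sat \<sigma> I AFalse = False"
| "sat \<sigma> I (AEq a0 a1) = (aval a0 \<sigma> I = aval a1 \<sigma> I)"
| "sat \<sigma> I (ALe a0 a1) = (aval a0 \<sigma> I \<le> aval a1 \<sigma> I)"
| "sat \<sigma> I (ANot A) = (\<not> sat \<sigma> I A)"
| "sat \<sigma> I (AAnd A0 A1) = (sat \<sigma> I A0 \<and> sat \<sigma> I A1)"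
| "sat \<sigma> I (AOr A0 A1) = (sat \<sigma> I A0 \<or> sat \<sigma> I A1)"
| "sat \<sigma> I (AImp A0 A1) = (sat \<sigma> I A0 \<longrightarrow> sat \<sigma> I A1)"
| "sat \<sigma> I (AForall i A) = (\<forall>n. sat \<sigma> (I(i := n)) A)"
| "sat \<sigma> I (AExists i A) = (\<exists>n. sat \<sigma> (I(i := n)) A)"

inductive exec :: "com \<Rightarrow> state \<Rightarrow> state \<Rightarrow> bool" where
  Skip: "exec Skip \<sigma> \<sigma>"
| Assign: "exec (Assign X a) \<sigma> (\<sigma>(X := caval a \<sigma>))"
| Seq: "exec c0 \<sigma> \<sigma>'' \<Longrightarrow> exec c1 \<sigma>'' \<sigma>' \<Longrightarrow> exec (Seq c0 c1) \<sigma> \<sigma>'"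
| IfT: "cbval b \<sigma> \<Longrightarrow> exec c0 \<sigma> \<sigma>' \<Longrightarrow> exec (If b c0 c1) \<sigma> \<sigma>'"
| IfF: "\<not> cbval b \<sigma> \<Longrightarrow> exec c1 \<sigma> \<sigma>' \<Longrightarrow> exec (If b c0 c1) \<sigma> \<sigma>'"
| WhileF: "\<not> cbval b \<sigma> \<Longrightarrow> exec (While b c) \<sigma> \<sigma>"
| WhileT: "cbval b \<sigma> \<Longrightarrow> exec c \<sigma> \<sigma>'' \<Longrightarrow> exec (While b c) \<sigma>'' \<sigma>'
           \<Longrightarrow> exec (While b c) \<sigma> \<sigma>'"
| Par: "exec c0 \<sigma> \<sigma>'' \<Longrightarrow> exec c1 \<sigma>'' \<sigma>' \<Longrightarrow> exec c1 \<sigma> \<sigma>''' \<Longrightarrow> exec c0 \<sigma>''' \<sigma>'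
        \<Longrightarrow> exec (Par c0 c1) \<sigma> \<sigma>'"

definition wp :: "interp \<Rightarrow> com \<Rightarrow> assn \<Rightarrow> state set" where
  "wp I c B = {\<sigma>. \<forall>\<sigma>'. exec c \<sigma> \<sigma>' \<longrightarrow> sat \<sigma>' I B}"

end

theory Submission
  imports Defs "HOL-Number_Theory.Cong"
begin

text \<open>
  Let \<open>V\<close> list the locations of \<open>c\<close>. A state \<open>\<sigma>\<close> satisfies \<open>wp[c, B]\<close> iff for every tuple
  \<open>h\<close> of values for \<open>V\<close> that \<open>c\<close> can produce from the values of \<open>V\<close> in \<open>\<sigma>\<close>, the assertion \<open>B\<close>
  holds in \<open>\<sigma>\<close> updated by \<open>h\<close>. Hence \<open>w[c, B]\<close> can be taken as: for all fresh integer variables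
  \<open>h\<close>, if \<open>V\<close> and \<open>h\<close> are related by the input/output relation of \<open>c\<close>, then \<open>B\<close> with \<open>h\<close>
  substituted for \<open>V\<close>. It remains to define that relation by an assertion, by induction on \<open>c\<close>:
  assignments and tests are arithmetic, sequential and parallel composition quantify over
  an intermediate tuple, and a loop is the reflexive transitive closure of its guarded body.
  The closure is expressible because its finitely many intermediate tuples can be coded into
  three integers by Goedel's \<open>\<beta>\<close>-function, which rests on the Chinese remainder theorem.
\<close>

section \<open>Definable properties of integer tuples\<close>
fun aexp_vars :: "aexp \<Rightarrow> intvar set" where
  "aexp_vars (N n) = {}"
| "aexp_vars (L X) = {}"
| "aexp_vars (IV i) = {i}"
| "aexp_vars (Plus a b) = aexp_vars a \<union> aexp_vars b"
| "aexp_vars (Minus a b) = aexp_vars a \<union> aexp_vars b"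
| "aexp_vars (Times a b) = aexp_vars a \<union> aexp_vars b"

lemma finite_aexp_vars [simp]: "finite (aexp_vars a)"
  by (induction a) auto

lemma aval_cong_interp: "(\<And>x. x \<in> aexp_vars a \<Longrightarrow> I x = J x) \<Longrightarrow> aval a \<sigma> I = aval a \<sigma> J"
  by (induction a) auto

definition expressible :: "(state \<Rightarrow> interp \<Rightarrow> bool) \<Rightarrow> bool" where
  "expressible P \<longleftrightarrow> (\<exists>A. \<forall>\<sigma> I. sat \<sigma> I A = P \<sigma> I)"

definition supported :: "nat \<Rightarrow> ((nat \<Rightarrow> int) \<Rightarrow> 'a) \<Rightarrow> bool" where
  "supported n P \<longleftrightarrow> (\<forall>f g. (\<forall>i<n. f i = g i) \<longrightarrow> P f = P g)"

text \<open>Quantifying over all substitutions makes closure under quantifiers easy: the bound variable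
  is just chosen fresh for the finitely many relevant expressions.\<close>

definition definable :: "((nat \<Rightarrow> int) \<Rightarrow> bool) \<Rightarrow> bool" where
  "definable P \<longleftrightarrow> (\<exists>n. supported n P) \<and> (\<forall>\<rho>. expressible (\<lambda>\<sigma> I. P (\<lambda>i. aval (\<rho> i) \<sigma> I)))"

lemma supportedD: "supported n P \<Longrightarrow> (\<And>i. i < n \<Longrightarrow> f i = g i) \<Longrightarrow> P f = P g"
  unfolding supported_def by blast

lemma supported_mono: "supported n P \<Longrightarrow> n \<le> m \<Longrightarrow> supported m P"
  unfolding supported_def by auto

lemma supported_combine:
  "supported n P \<Longrightarrow> supported m Q \<Longrightarrow> supported (max n m) (\<lambda>f. h (P f) (Q f))"
  unfolding supported_def by (metis less_max_iff_disj)

inductive poly_fun :: "((nat \<Rightarrow> int) \<Rightarrow> int) \<Rightarrow> bool" where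
  poly_fun_var: "poly_fun (\<lambda>f. f i)"
| poly_fun_const: "poly_fun (\<lambda>f. c)"
| poly_fun_add: "poly_fun F \<Longrightarrow> poly_fun G \<Longrightarrow> poly_fun (\<lambda>f. F f + G f)"
| poly_fun_diff: "poly_fun F \<Longrightarrow> poly_fun G \<Longrightarrow> poly_fun (\<lambda>f. F f - G f)"
| poly_fun_mult: "poly_fun F \<Longrightarrow> poly_fun G \<Longrightarrow> poly_fun (\<lambda>f. F f * G f)"

lemma poly_fun_supported: "poly_fun F \<Longrightarrow> \<exists>n. supported n F"
proof (induction rule: poly_fun.induct)
  case (poly_fun_var i)
  show ?case by (rule exI[of _ "Suc i"]) (simp add: supported_def)
next
  case (poly_fun_const c)
  show ?case by (simp add: supported_def)
next
  case (poly_fun_add F G)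
  then show ?case using supported_combine[where h = "(+)"] by blast
next
  case (poly_fun_diff F G)
  then show ?case using supported_combine[where h = "(-)"] by blast
next
  case (poly_fun_mult F G)
  then show ?case using supported_combine[where h = "(*)"] by blast
qed

lemma poly_fun_aexp: "poly_fun F \<Longrightarrow> \<exists>a. \<forall>\<sigma> I. aval a \<sigma> I = F (\<lambda>i. aval (\<rho> i) \<sigma> I)"
proof (induction rule: poly_fun.induct)
  case (poly_fun_var i)
  show ?case by (rule exI[of _ "\<rho> i"]) simp
next
  case (poly_fun_const c)
  show ?case by (rule exI[of _ "N c"]) simp
qed (metis aval.simps(4-6))+

lemma poly_fun_compose: "poly_fun F \<Longrightarrow> (\<And>i. poly_fun (G i)) \<Longrightarrow> poly_fun (\<lambda>f. F (\<lambda>i. G i f))"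
  by (induction rule: poly_fun.induct) (auto intro: poly_fun.intros)

lemma definable_const: "definable (\<lambda>f. b)"
  unfolding definable_def expressible_def supported_def
  by (cases b) (auto intro: exI[of _ ATrue] exI[of _ AFalse])

lemma definable_compare:
  assumes atom: "\<And>a b. \<exists>A. \<forall>\<sigma> I. sat \<sigma> I A = R (aval a \<sigma> I) (aval b \<sigma> I)"
    and "poly_fun F" "poly_fun G"
  shows "definable (\<lambda>f. R (F f) (G f))"
  unfolding definable_def
proof (intro conjI allI)
  obtain n m where "supported n F" "supported m G"
    using assms(2,3) by (blast dest: poly_fun_supported)
  then show "\<exists>n. supported n (\<lambda>f. R (F f) (G f))"
    using supported_combine[where h = R] by blast
  fix \<rho>
  obtain a b where "\<forall>\<sigma> I. aval a \<sigma> I = F (\<lambda>i. aval (\<rho> i) \<sigma> I)" "\<forall>\<sigma> I. aval b \<sigma> I = G (\<lambda>i. aval (\<rho> i) \<sigma> I)"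
    using assms(2,3) by (blast dest: poly_fun_aexp)
  with atom[of a b] show "expressible (\<lambda>\<sigma> I. R (F (\<lambda>i. aval (\<rho> i) \<sigma> I)) (G (\<lambda>i. aval (\<rho> i) \<sigma> I)))"
    unfolding expressible_def by auto
qed

lemma definable_eq: "poly_fun F \<Longrightarrow> poly_fun G \<Longrightarrow> definable (\<lambda>f. F f = G f)"
  by (rule definable_compare[where R = "(=)"]) (metis sat.simps(3))

lemma definable_le: "poly_fun F \<Longrightarrow> poly_fun G \<Longrightarrow> definable (\<lambda>f. F f \<le> G f)"
  by (rule definable_compare[where R = "(\<le>)"]) (metis sat.simps(4))

lemma definable_not: "definable P \<Longrightarrow> definable (\<lambda>f. \<not> P f)"
  unfolding definable_def expressible_def supported_def by (metis sat.simps(5))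

lemma definable_less: "poly_fun F \<Longrightarrow> poly_fun G \<Longrightarrow> definable (\<lambda>f. F f < G f)"
  using definable_not[OF definable_le[of G F]] by (simp add: not_le)

lemma definable_conj: "definable P \<Longrightarrow> definable Q \<Longrightarrow> definable (\<lambda>f. P f \<and> Q f)"
  unfolding definable_def
proof (elim conjE exE, intro conjI allI)
  fix n m \<rho> assume "supported n P" "supported m Q"
  then show "\<exists>n. supported n (\<lambda>f. P f \<and> Q f)"
    using supported_combine[where h = "(\<and>)"] by blast
  assume "\<forall>\<rho>. expressible (\<lambda>\<sigma> I. P (\<lambda>i. aval (\<rho> i) \<sigma> I))"
    "\<forall>\<rho>. expressible (\<lambda>\<sigma> I. Q (\<lambda>i. aval (\<rho> i) \<sigma> I))"
  then obtain A B where "\<forall>\<sigma> I. sat \<sigma> I A = P (\<lambda>i. aval (\<rho> i) \<sigma> I)"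
    "\<forall>\<sigma> I. sat \<sigma> I B = Q (\<lambda>i. aval (\<rho> i) \<sigma> I)"
    unfolding expressible_def by blast
  then show "expressible (\<lambda>\<sigma> I. P (\<lambda>i. aval (\<rho> i) \<sigma> I) \<and> Q (\<lambda>i. aval (\<rho> i) \<sigma> I))"
    unfolding expressible_def by (intro exI[of _ "AAnd A B"]) simp
qed

lemma definable_disj: "definable P \<Longrightarrow> definable Q \<Longrightarrow> definable (\<lambda>f. P f \<or> Q f)"
  using definable_not[OF definable_conj[OF definable_not definable_not]] by simp

lemma definable_imp: "definable P \<Longrightarrow> definable Q \<Longrightarrow> definable (\<lambda>f. P f \<longrightarrow> Q f)"
  using definable_disj[OF definable_not] by simp

lemma definable_if:
  "definable B \<Longrightarrow> definable P \<Longrightarrow> definable Q \<Longrightarrow> definable (\<lambda>f. if B f then P f else Q f)"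
  using definable_disj[OF definable_conj definable_conj[OF definable_not]] by (simp add: if_bool_eq_disj)

lemma definable_ball: "(\<And>j. j < k \<Longrightarrow> definable (P j)) \<Longrightarrow> definable (\<lambda>f. \<forall>j<(k::nat). P j f)"
proof (induction k)
  case 0
  show ?case using definable_const[of True] by simp
next
  case (Suc k)
  then have "definable (\<lambda>f. (\<forall>j<k. P j f) \<and> P k f)" by (intro definable_conj) auto
  then show ?case by (simp add: less_Suc_eq conj_commute all_conj_distrib)
qed

lemma definable_ex_case_nat:
  assumes Q: "definable Q"
  shows "definable (\<lambda>f. \<exists>a. Q (case_nat a f))"
proof -
  obtain n where n: "supported n Q"
    using Q unfolding definable_def by blast
  have supp: "supported n (\<lambda>f. \<exists>a. Q (case_nat a f))"
    unfolding supported_def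
  proof (intro allI impI)
    fix f g :: "nat \<Rightarrow> int" assume "\<forall>i<n. f i = g i"
    then have "Q (case_nat a f) = Q (case_nat a g)" for a
      by (intro supportedD[OF supported_mono[OF n le_SucI[OF order_refl]]]) (auto split: nat.split)
    then show "(\<exists>a. Q (case_nat a f)) = (\<exists>a. Q (case_nat a g))"
      by simp
  qed
  have expr: "expressible (\<lambda>\<sigma> I. \<exists>a. Q (case_nat a (\<lambda>i. aval (\<rho> i) \<sigma> I)))" for \<rho>
  proof -
    have "finite (\<Union>i<n. aexp_vars (\<rho> i))"
      by simp
    then obtain z where z: "z \<notin> (\<Union>i<n. aexp_vars (\<rho> i))"
      using ex_new_if_finite[OF infinite_UNIV_listI] by blast
    obtain A where A: "\<forall>\<sigma> I. sat \<sigma> I A = Q (\<lambda>i. aval (case_nat (IV z) \<rho> i) \<sigma> I)"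
      using Q unfolding definable_def expressible_def by blast
    have "aval (case_nat (IV z) \<rho> i) \<sigma> (I(z := a)) = case_nat a (\<lambda>i. aval (\<rho> i) \<sigma> I) i"
      if "i < n" for \<sigma> I a i
    proof (cases i)
      case (Suc j)
      then have "z \<notin> aexp_vars (\<rho> j)"
        using z that by simp
      then show ?thesis
        using Suc by (auto intro: aval_cong_interp)
    qed simp
    then have "sat \<sigma> (I(z := a)) A = Q (case_nat a (\<lambda>i. aval (\<rho> i) \<sigma> I))" for \<sigma> I a
      unfolding A[rule_format] by (rule supportedD[OF n])
    then have "sat \<sigma> I (AExists z A) = (\<exists>a. Q (case_nat a (\<lambda>i. aval (\<rho> i) \<sigma> I)))" for \<sigma> I
      by simp
    then show ?thesis
      unfolding expressible_def by blast
  qed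
  show ?thesis
    unfolding definable_def by (intro conjI allI exI[of _ n] supp expr)
qed

lemma definable_ex:
  "definable (\<lambda>g. P (g 0) (\<lambda>i. g (Suc i))) \<Longrightarrow> definable (\<lambda>f. \<exists>a. P a f)"
  using definable_ex_case_nat[of "\<lambda>g. P (g 0) (\<lambda>i. g (Suc i))"] by simp

lemma definable_all:
  assumes "definable (\<lambda>g. P (g 0) (\<lambda>i. g (Suc i)))"
  shows "definable (\<lambda>f. \<forall>a. P a f)"
  using definable_not[OF definable_ex[OF definable_not[OF assms]]] by simp

lemma definable_subst:
  assumes P: "definable P" and F: "\<And>i. poly_fun (F i)"
  shows "definable (\<lambda>f. P (\<lambda>i. F i f))"
  unfolding definable_def
proof (intro conjI allI)
  obtain n where n: "supported n P"
    using P unfolding definable_def by blast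
  have "\<forall>i. \<exists>m. supported m (F i)"
    using poly_fun_supported[OF F] by blast
  then obtain m where m: "\<And>i. supported (m i) (F i)"
    by (rule choice[THEN exE]) blast
  show "\<exists>n. supported n (\<lambda>f. P (\<lambda>i. F i f))"
  proof (intro exI[of _ "Max (m ` {..<n})"], unfold supported_def, intro allI impI)
    fix f g :: "nat \<Rightarrow> int" assume fg: "\<forall>i<Max (m ` {..<n}). f i = g i"
    have "F i f = F i g" if "i < n" for i
    proof (rule supportedD[OF m])
      have "m i \<le> Max (m ` {..<n})"
        using that by (simp add: Max_ge)
      then show "j < m i \<Longrightarrow> f j = g j" for j
        using fg by simp
    qed
    then show "P (\<lambda>i. F i f) = P (\<lambda>i. F i g)"
      by (intro supportedD[OF n])
  qed
  fix \<rho>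
  have "\<forall>i. \<exists>a. \<forall>\<sigma> I. aval a \<sigma> I = F i (\<lambda>j. aval (\<rho> j) \<sigma> I)"
    using poly_fun_aexp[OF F] by blast
  then obtain a where a: "\<forall>i \<sigma> I. aval (a i) \<sigma> I = F i (\<lambda>j. aval (\<rho> j) \<sigma> I)"
    by (rule choice[THEN exE]) blast
  have "expressible (\<lambda>\<sigma> I. P (\<lambda>i. aval (a i) \<sigma> I))"
    using P unfolding definable_def by blast
  then show "expressible (\<lambda>\<sigma> I. P (\<lambda>i. F i (\<lambda>i. aval (\<rho> i) \<sigma> I)))"
    by (simp add: a)
qed

definition prepend :: "nat \<Rightarrow> (nat \<Rightarrow> 'a) \<Rightarrow> (nat \<Rightarrow> 'a) \<Rightarrow> nat \<Rightarrow> 'a" where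
  "prepend k h f i = (if i < k then h i else f (i - k))"

lemma prepend_less [simp]: "i < k \<Longrightarrow> prepend k h f i = h i"
  and prepend_add [simp]: "prepend k h f (k + i) = f i"
  by (simp_all add: prepend_def)

lemma prepend_cong: "(\<And>i. i < k \<Longrightarrow> h i = h' i) \<Longrightarrow> prepend k h f = prepend k h' f"
  by (simp add: prepend_def fun_eq_iff)

lemma prepend_Suc: "prepend (Suc k) h f = prepend k h (case_nat (h k) f)"
proof
  fix i
  consider "i < k" | "i = k" | j where "i = Suc (k + j)"
    by (metis less_imp_Suc_add linorder_neqE_nat)
  then show "prepend (Suc k) h f i = prepend k h (case_nat (h k) f) i"
    by cases (simp_all add: prepend_def Suc_diff_le)
qed

lemma definable_ex_prefix: "definable P \<Longrightarrow> definable (\<lambda>f. \<exists>h. P (prepend k h f))"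
proof (induction k arbitrary: P)
  case 0
  then show ?case by (simp add: prepend_def)
next
  case (Suc k)
  have "definable (\<lambda>g. \<exists>h. P (prepend k h g))"
    using Suc by blast
  then have "definable (\<lambda>f. \<exists>a h. P (prepend k h (case_nat a f)))"
    by (rule definable_ex_case_nat)
  moreover have "(\<exists>h. P (prepend (Suc k) h f)) = (\<exists>a h. P (prepend k h (case_nat a f)))" for f
  proof
    assume "\<exists>h. P (prepend (Suc k) h f)"
    then show "\<exists>a h. P (prepend k h (case_nat a f))"
      unfolding prepend_Suc by blast
  next
    assume "\<exists>a h. P (prepend k h (case_nat a f))"
    then obtain a h where "P (prepend k h (case_nat a f))"
      by blast
    moreover have "prepend k h (case_nat a f) = prepend (Suc k) (h(k := a)) f"
      unfolding prepend_Suc fun_upd_same by (rule prepend_cong) simp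
    ultimately show "\<exists>h. P (prepend (Suc k) h f)"
      by auto
  qed
  ultimately show ?case by simp
qed

lemma definable_ex_tuple:
  assumes "definable (\<lambda>g. P g (\<lambda>i. g (k + i)))"
    and "\<And>h h' f. (\<And>i. i < k \<Longrightarrow> h i = h' i) \<Longrightarrow> P h f = P h' f"
  shows "definable (\<lambda>f. \<exists>h. P h f)"
proof -
  have "definable (\<lambda>f. \<exists>h. P (prepend k h f) (\<lambda>i. prepend k h f (k + i)))"
    by (rule definable_ex_prefix[OF assms(1)])
  moreover have "P (prepend k h f) f = P h f" for h f
    by (rule assms(2)) simp
  ultimately show ?thesis
    by simp
qed

section \<open>Goedel's \<open>\<beta>\<close>-function\<close>

lemma coprime_beta_moduli:
  assumes "i < j" "j \<le> m"
  shows "coprime (1 + (i + 1) * fact m) (1 + (j + 1) * fact m :: nat)"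
proof -
  let ?d = "fact m :: nat"
  let ?g = "gcd (1 + (i + 1) * ?d) (1 + (j + 1) * ?d)"
  have "int ?g dvd int (j + 1) * int (1 + (i + 1) * ?d) - int (i + 1) * int (1 + (j + 1) * ?d)"
    by (intro dvd_diff dvd_mult) (simp_all only: int_dvd_int_iff gcd_dvd1 gcd_dvd2)
  also have "int (j + 1) * int (1 + (i + 1) * ?d) - int (i + 1) * int (1 + (j + 1) * ?d) = int (j - i)"
    using assms(1) by (simp add: algebra_simps of_nat_diff)
  finally have "?g dvd j - i"
    by (simp only: int_dvd_int_iff)
  then have "?g \<le> m"
    using assms by (metis diff_le_self dvd_imp_le le_trans zero_less_diff)
  then have "?g dvd (i + 1) * ?d"
    by (simp add: dvd_fact Suc_leI)
  then have "?g dvd 1"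
    by (metis dvd_add_left_iff gcd_dvd1)
  then show ?thesis
    by (simp add: coprime_iff_gcd_eq_1)
qed

text \<open>With \<open>d = m!\<close> for an \<open>m\<close> bounding \<open>M\<close> and all \<open>a i\<close>, the moduli are pairwise coprime
  and exceed every \<open>a i\<close>, so the Chinese remainder theorem provides \<open>c\<close>.\<close>

lemma goedel_beta_nat:
  fixes a :: "nat \<Rightarrow> nat"
  shows "\<exists>c d. \<forall>i<M. a i = c mod (1 + (i + 1) * d)"
proof -
  define m where "m = M + (\<Sum>i<M. a i)"
  define d where "d = (fact m :: nat)"
  have cop: "coprime (1 + (i + 1) * d) (1 + (j + 1) * d)" if "i < M" "j < M" "i \<noteq> j" for i j
  proof (cases "i < j")
    case True
    then show ?thesis
      using that coprime_beta_moduli[of i j m] by (simp add: m_def d_def)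
  next
    case False
    then have "j < i"
      using that(3) by simp
    then show ?thesis
      using that coprime_beta_moduli[of j i m] by (simp add: m_def d_def coprime_commute)
  qed
  obtain c where c: "\<forall>i\<in>{..<M}. [c = a i] (mod (1 + (i + 1) * d))"
    using chinese_remainder_nat[of "{..<M}" "\<lambda>i. 1 + (i + 1) * d" a] cop by auto
  have "a i = c mod (1 + (i + 1) * d)" if "i < M" for i
  proof -
    have "a i \<le> m"
      using that by (simp add: m_def member_le_sum trans_le_add2)
    also have "m \<le> d"
      unfolding d_def by (rule fact_ge_self)
    finally have "a i < 1 + (i + 1) * d"
      by simp
    with c that show ?thesis
      by (simp add: cong_def)
  qed
  then show ?thesis
    by blast
qed

text \<open>Entry \<open>t\<close> of the sequence coded by \<open>c\<close>, \<open>d\<close>, \<open>e\<close> is the \<open>\<beta>\<close>-function value minus \<open>e\<close>;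
  the offset makes negative entries reachable.\<close>

definition beta_code :: "int \<Rightarrow> int \<Rightarrow> int \<Rightarrow> int \<Rightarrow> int \<Rightarrow> bool" where
  "beta_code c d e t v \<longleftrightarrow>
    (\<exists>q. c = q * (1 + (t + 1) * d) + (v + e) \<and> 0 \<le> v + e \<and> v + e < 1 + (t + 1) * d)"

lemma beta_code_eq:
  assumes "beta_code c d e t v"
  shows "v = c mod (1 + (t + 1) * d) - e"
proof -
  obtain q where "c = q * (1 + (t + 1) * d) + (v + e)" "0 \<le> v + e" "v + e < 1 + (t + 1) * d"
    using assms unfolding beta_code_def by blast
  then have "c mod (1 + (t + 1) * d) = v + e"
    by simp
  then show ?thesis
    by simp
qed

lemma beta_code_exists: "\<exists>c d e. \<forall>t<M. beta_code c d e (int t) (x t)"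
proof -
  define e where "e = (\<Sum>t<M. \<bar>x t\<bar>)"
  obtain c d where cd: "\<forall>t<M. nat (x t + e) = c mod (1 + (t + 1) * d)"
    using goedel_beta_nat[of M "\<lambda>t. nat (x t + e)"] by blast
  have "beta_code (int c) (int d) e (int t) (x t)" if "t < M" for t
  proof -
    let ?m = "1 + (int t + 1) * int d"
    have "\<bar>x t\<bar> \<le> e"
      using that unfolding e_def by (intro member_le_sum) auto
    then have "x t + e = int (nat (x t + e))"
      by simp
    also have "\<dots> = int (c mod (1 + (t + 1) * d))"
      using cd that by simp
    also have "\<dots> = int c mod ?m"
      by (simp add: of_nat_mod algebra_simps)
    finally have "x t + e = int c mod ?m" .
    moreover have "0 < ?m"
      by (simp add: add_pos_nonneg)
    ultimately show ?thesis
      unfolding beta_code_def by (intro exI[of _ "int c div ?m"]) (simp add: div_mult_mod_eq)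
  qed
  then show ?thesis
    by blast
qed

lemma poly_fun_shift: "poly_fun F \<Longrightarrow> poly_fun (\<lambda>g. F (\<lambda>i. g (Suc i)))"
  using poly_fun_compose[of F "\<lambda>i g. g (Suc i)"] by (simp add: poly_fun_var)

lemma definable_beta_code:
  assumes "poly_fun C" "poly_fun D" "poly_fun E" "poly_fun T" "poly_fun V"
  shows "definable (\<lambda>f. beta_code (C f) (D f) (E f) (T f) (V f))"
  unfolding beta_code_def
  by (rule definable_ex) (intro definable_conj definable_eq definable_le definable_less
      poly_fun.intros assms[THEN poly_fun_shift])

section \<open>Relations between tuples\<close>

text \<open>A property \<open>R\<close> of tuples with \<open>supported (2 * k) R\<close> is read as a relation between
  \<open>k\<close>-tuples: the first \<open>k\<close> entries against the next \<open>k\<close>.\<close>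

definition tuple_relcomp ::
    "nat \<Rightarrow> ((nat \<Rightarrow> int) \<Rightarrow> bool) \<Rightarrow> ((nat \<Rightarrow> int) \<Rightarrow> bool) \<Rightarrow> (nat \<Rightarrow> int) \<Rightarrow> bool" where
  "tuple_relcomp k R S g \<longleftrightarrow> (\<exists>h. R (prepend k g h) \<and> S (prepend k h (\<lambda>i. g (k + i))))"

definition tuple_rtrancl :: "nat \<Rightarrow> ((nat \<Rightarrow> int) \<Rightarrow> bool) \<Rightarrow> (nat \<Rightarrow> int) \<Rightarrow> bool" where
  "tuple_rtrancl k R g \<longleftrightarrow> (\<exists>n x. (\<forall>j<k. x 0 j = g j \<and> x n j = g (k + j))
     \<and> (\<forall>i<n. R (prepend k (x i) (x (Suc i)))))"

lemma supported_prepend: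
  assumes "supported (2 * k) R" "\<And>i. i < k \<Longrightarrow> h i = h' i"
  shows "R (prepend k f h) = R (prepend k f h')"
  using assms by (intro supportedD[OF assms(1)]) (simp add: prepend_def)

lemma definable_tuple_relcomp:
  assumes R: "definable R" "supported (2 * k) R" and S: "definable S" "supported (2 * k) S"
  shows "definable (tuple_relcomp k R S)"
proof -
  have "poly_fun (\<lambda>G. prepend k (\<lambda>i. G (k + i)) G i)" for i
    by (cases "i < k") (simp_all add: prepend_def poly_fun_var)
  then have "definable (\<lambda>G. R (prepend k (\<lambda>i. G (k + i)) G))"
    by (rule definable_subst[OF R(1)])
  moreover have "poly_fun (\<lambda>G. prepend k G (\<lambda>i. G (k + (k + i))) i)" for i
    by (cases "i < k") (simp_all add: prepend_def poly_fun_var)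
  then have "definable (\<lambda>G. S (prepend k G (\<lambda>i. G (k + (k + i)))))"
    by (rule definable_subst[OF S(1)])
  ultimately have "definable (\<lambda>G. R (prepend k (\<lambda>i. G (k + i)) G)
      \<and> S (prepend k G (\<lambda>i. G (k + (k + i)))))"
    by (rule definable_conj)
  then have "definable (\<lambda>g. \<exists>h. R (prepend k g h) \<and> S (prepend k h (\<lambda>i. g (k + i))))"
  proof (rule definable_ex_tuple)
    fix h h' :: "nat \<Rightarrow> int" and g assume hh': "\<And>i. i < k \<Longrightarrow> h i = h' i"
    then have "R (prepend k g h) = R (prepend k g h')"
      by (rule supported_prepend[OF R(2)])
    moreover have "prepend k h (\<lambda>i. g (k + i)) = prepend k h' (\<lambda>i. g (k + i))"
      using hh' by (rule prepend_cong)
    ultimately show "(R (prepend k g h) \<and> S (prepend k h (\<lambda>i. g (k + i))))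
        = (R (prepend k g h') \<and> S (prepend k h' (\<lambda>i. g (k + i))))"
      by simp
  qed
  then show ?thesis
    unfolding tuple_relcomp_def .
qed

lemma beta_code_matrix_exists:
  "\<exists>c d e. \<forall>i\<le>n. \<forall>j<k. beta_code c d e (int i * int k + int j) (x i j)"
proof -
  obtain c d e where cde: "\<forall>t<Suc n * k. beta_code c d e (int t) (x (t div k) (t mod k))"
    using beta_code_exists[of "Suc n * k" "\<lambda>t. x (t div k) (t mod k)"] by blast
  have "beta_code c d e (int i * int k + int j) (x i j)" if "i \<le> n" "j < k" for i j
  proof -
    have "i * k + j < Suc i * k"
      using that by simp
    also have "\<dots> \<le> Suc n * k"
      using that by (intro mult_le_mono1) simp
    finally have "beta_code c d e (int (i * k + j)) (x ((i * k + j) div k) ((i * k + j) mod k))"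
      using cde by blast
    moreover have "(i * k + j) div k = i" "(i * k + j) mod k = j"
      using that by simp_all
    ultimately show ?thesis
      by simp
  qed
  then show ?thesis
    by blast
qed

text \<open>A chain \<open>x 0, \<dots>, x n\<close> of \<open>k\<close>-tuples is stored as one integer sequence,
  entry \<open>j\<close> of \<open>x i\<close> at position \<open>i * k + j\<close>.\<close>

definition beta_coded_chain :: "nat \<Rightarrow> ((nat \<Rightarrow> int) \<Rightarrow> bool) \<Rightarrow> (nat \<Rightarrow> int) \<Rightarrow> bool" where
  "beta_coded_chain k R g \<longleftrightarrow> (\<exists>c d e n. 0 \<le> n
    \<and> (\<forall>j<k. beta_code c d e (int j) (g j) \<and> beta_code c d e (n * int k + int j) (g (k + j)))
    \<and> (\<forall>i. 0 \<le> i \<and> i < n \<longrightarrow>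
          (\<exists>h. (\<forall>j<2 * k. beta_code c d e (i * int k + int j) (h j)) \<and> R h)))"

lemma tuple_rtrancl_imp_beta_coded_chain:
  assumes "tuple_rtrancl k R g"
  shows "beta_coded_chain k R g"
proof -
  obtain n x where x: "\<forall>j<k. x 0 j = g j \<and> x n j = g (k + j)"
    "\<forall>i<n. R (prepend k (x i) (x (Suc i)))"
    using assms unfolding tuple_rtrancl_def by blast
  obtain c d e where code: "\<And>i j. i \<le> n \<Longrightarrow> j < k \<Longrightarrow> beta_code c d e (int i * int k + int j) (x i j)"
    using beta_code_matrix_exists[of n k x] by blast
  have step: "\<exists>h. (\<forall>j<2 * k. beta_code c d e (int i * int k + int j) (h j)) \<and> R h"
    if "i < n" for i
  proof (intro exI conjI allI impI)
    show "R (prepend k (x i) (x (Suc i)))"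
      using x(2) that by blast
    fix j assume "j < 2 * k"
    then show "beta_code c d e (int i * int k + int j) (prepend k (x i) (x (Suc i)) j)"
      using code[of i j] code[of "Suc i" "j - k"] that by (auto simp: prepend_def algebra_simps of_nat_diff)
  qed
  have steps: "\<forall>i. 0 \<le> i \<and> i < int n \<longrightarrow>
      (\<exists>h. (\<forall>j<2 * k. beta_code c d e (i * int k + int j) (h j)) \<and> R h)"
  proof (intro allI impI)
    fix i :: int assume i: "0 \<le> i \<and> i < int n"
    then obtain i' where "i = int i'"
      using zero_le_imp_eq_int by blast
    with i step[of i'] show "\<exists>h. (\<forall>j<2 * k. beta_code c d e (i * int k + int j) (h j)) \<and> R h"
      by simp
  qed
  have ends: "\<forall>j<k. beta_code c d e (int j) (g j) \<and> beta_code c d e (int n * int k + int j) (g (k + j))"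
    using code[of 0] code[of n] x(1) by simp
  show ?thesis
    unfolding beta_coded_chain_def
    by (rule exI[of _ c], rule exI[of _ d], rule exI[of _ e], rule exI[of _ "int n"])
      (intro conjI of_nat_0_le_iff ends steps)
qed

lemma beta_coded_chain_imp_tuple_rtrancl:
  assumes R: "supported (2 * k) R" and "beta_coded_chain k R g"
  shows "tuple_rtrancl k R g"
proof -
  obtain c d e n where "0 \<le> n"
    and ends: "\<forall>j<k. beta_code c d e (int j) (g j) \<and> beta_code c d e (n * int k + int j) (g (k + j))"
    and steps: "\<forall>i. 0 \<le> i \<and> i < n \<longrightarrow>
          (\<exists>h. (\<forall>j<2 * k. beta_code c d e (i * int k + int j) (h j)) \<and> R h)"
    using assms(2) unfolding beta_coded_chain_def by blast
  define x where "x i j = c mod (1 + (int i * int k + int j + 1) * d) - e" for i j :: nat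
  have decode: "v = x i j" if "beta_code c d e (int i * int k + int j) v" for i j v
    using beta_code_eq[OF that] by (simp add: x_def)
  obtain n' where n': "n = int n'"
    using \<open>0 \<le> n\<close> zero_le_imp_eq_int by blast
  have "R (prepend k (x i) (x (Suc i)))" if i: "i < n'" for i
  proof -
    have "0 \<le> int i \<and> int i < n"
      using i n' by simp
    then obtain h where h: "\<forall>j<2 * k. beta_code c d e (int i * int k + int j) (h j)" "R h"
      using steps by blast
    have "h j = prepend k (x i) (x (Suc i)) j" if "j < 2 * k" for j
    proof (cases "j < k")
      case True
      then show ?thesis
        using decode[OF h(1)[rule_format, OF that]] by simp
    next
      case False
      then have eq: "int i * int k + int j = int (Suc i) * int k + int (j - k)"
        by (simp add: algebra_simps of_nat_diff)
      have "beta_code c d e (int (Suc i) * int k + int (j - k)) (h j)"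
        unfolding eq[symmetric] using h(1) that by blast
      from decode[OF this] False show ?thesis
        by (simp add: prepend_def)
    qed
    then have "R h = R (prepend k (x i) (x (Suc i)))"
      by (rule supportedD[OF R])
    with h(2) show ?thesis
      by simp
  qed
  moreover have "\<forall>j<k. x 0 j = g j \<and> x n' j = g (k + j)"
  proof (intro allI impI conjI)
    fix j assume "j < k"
    then show "x 0 j = g j" "x n' j = g (k + j)"
      using ends n' decode[of 0 j "g j"] decode[of n' j "g (k + j)"] by simp_all
  qed
  ultimately show ?thesis
    unfolding tuple_rtrancl_def by blast
qed

lemma definable_beta_coded_chain:
  assumes "definable R" "supported (2 * k) R"
  shows "definable (beta_coded_chain k R)"
  unfolding beta_coded_chain_def
  by (intro definable_ex definable_conj definable_le definable_ball definable_beta_code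
      definable_all definable_imp definable_less poly_fun.intros assms(1)
      definable_ex_tuple[where k = "2 * k"])
    (metis (no_types, lifting) supportedD[OF assms(2)])

lemma definable_tuple_rtrancl:
  assumes "definable R" "supported (2 * k) R"
  shows "definable (tuple_rtrancl k R)"
proof -
  have "tuple_rtrancl k R g = beta_coded_chain k R g" for g
    using tuple_rtrancl_imp_beta_coded_chain[of k R g] beta_coded_chain_imp_tuple_rtrancl[OF assms(2), of g]
    by blast
  then have "tuple_rtrancl k R = beta_coded_chain k R"
    by (rule ext)
  then show ?thesis
    using definable_beta_coded_chain[OF assms] by simp
qed

section \<open>Input/output relations of commands\<close>

fun index :: "'a list \<Rightarrow> 'a \<Rightarrow> nat" where
  "index [] y = 0"
| "index (x # xs) y = (if x = y then 0 else Suc (index xs y))"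

lemma index_less_length: "y \<in> set xs \<Longrightarrow> index xs y < length xs"
  by (induction xs) auto

lemma nth_index: "y \<in> set xs \<Longrightarrow> xs ! index xs y = y"
  by (induction xs) auto

lemma index_nth: "distinct xs \<Longrightarrow> i < length xs \<Longrightarrow> index xs (xs ! i) = i"
  by (induction xs arbitrary: i) (auto simp: nth_Cons split: nat.split)

definition override_list :: "('a \<Rightarrow> 'b) \<Rightarrow> 'a list \<Rightarrow> (nat \<Rightarrow> 'b) \<Rightarrow> 'a \<Rightarrow> 'b" where
  "override_list f xs h x = (if x \<in> set xs then h (index xs x) else f x)"

lemma override_list_nth [simp]:
  "distinct xs \<Longrightarrow> i < length xs \<Longrightarrow> override_list f xs h (xs ! i) = h i"
  by (simp add: override_list_def index_nth)

lemma override_list_notin [simp]: "x \<notin> set xs \<Longrightarrow> override_list f xs h x = f x"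
  by (simp add: override_list_def)

lemma override_list_cong:
  "(\<And>i. i < length xs \<Longrightarrow> h i = h' i) \<Longrightarrow> override_list f xs h = override_list f xs h'"
  by (simp add: override_list_def fun_eq_iff index_less_length)

lemma override_list_eq_iff:
  "distinct xs \<Longrightarrow> override_list f xs h = override_list f xs h' \<longleftrightarrow> (\<forall>i<length xs. h i = h' i)"
  by (metis override_list_cong override_list_nth)

lemma override_list_nth_self:
  "(\<And>x. x \<notin> set xs \<Longrightarrow> g x = f x) \<Longrightarrow> override_list f xs (\<lambda>i. g (xs ! i)) = g"
  by (auto simp: override_list_def fun_eq_iff nth_index)

lemma override_on_eq_override_list: "override_on f g (set xs) = override_list f xs (\<lambda>i. g (xs ! i))"
  by (simp add: override_on_def override_list_def fun_eq_iff nth_index)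

fun caexp_locs :: "caexp \<Rightarrow> loc set" where
  "caexp_locs (CN n) = {}"
| "caexp_locs (CL X) = {X}"
| "caexp_locs (CPlus a b) = caexp_locs a \<union> caexp_locs b"
| "caexp_locs (CMinus a b) = caexp_locs a \<union> caexp_locs b"
| "caexp_locs (CTimes a b) = caexp_locs a \<union> caexp_locs b"

fun cbexp_locs :: "cbexp \<Rightarrow> loc set" where
  "cbexp_locs CTrue = {}"
| "cbexp_locs CFalse = {}"
| "cbexp_locs (CEq a b) = caexp_locs a \<union> caexp_locs b"
| "cbexp_locs (CLe a b) = caexp_locs a \<union> caexp_locs b"
| "cbexp_locs (CNot b) = cbexp_locs b"
| "cbexp_locs (CAnd b1 b2) = cbexp_locs b1 \<union> cbexp_locs b2"
| "cbexp_locs (COr b1 b2) = cbexp_locs b1 \<union> cbexp_locs b2"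

fun com_locs :: "com \<Rightarrow> loc set" where
  "com_locs Skip = {}"
| "com_locs (Assign X a) = insert X (caexp_locs a)"
| "com_locs (Seq c0 c1) = com_locs c0 \<union> com_locs c1"
| "com_locs (If b c0 c1) = cbexp_locs b \<union> com_locs c0 \<union> com_locs c1"
| "com_locs (While b c) = cbexp_locs b \<union> com_locs c"
| "com_locs (Par c0 c1) = com_locs c0 \<union> com_locs c1"

lemma finite_caexp_locs: "finite (caexp_locs a)"
  by (induction a) auto

lemma finite_cbexp_locs: "finite (cbexp_locs b)"
  by (induction b) (auto simp: finite_caexp_locs)

lemma finite_com_locs: "finite (com_locs c)"
  by (induction c) (auto simp: finite_caexp_locs finite_cbexp_locs)

lemma caval_cong: "(\<And>X. X \<in> caexp_locs a \<Longrightarrow> \<sigma> X = \<tau> X) \<Longrightarrow> caval a \<sigma> = caval a \<tau>"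
  by (induction a) auto

lemma cbval_cong: "(\<And>X. X \<in> cbexp_locs b \<Longrightarrow> \<sigma> X = \<tau> X) \<Longrightarrow> cbval b \<sigma> = cbval b \<tau>"
proof (induction b)
  case (CEq a0 a1)
  then show ?case using caval_cong[of a0 \<sigma> \<tau>] caval_cong[of a1 \<sigma> \<tau>] by simp
next
  case (CLe a0 a1)
  then show ?case using caval_cong[of a0 \<sigma> \<tau>] caval_cong[of a1 \<sigma> \<tau>] by simp
qed auto

lemma exec_unchanged: "exec c \<sigma> \<sigma>' \<Longrightarrow> X \<notin> com_locs c \<Longrightarrow> \<sigma>' X = \<sigma> X"
  by (induction rule: exec.induct) auto

lemma override_on_self: "(\<And>x. x \<in> A \<Longrightarrow> g x = f x) \<Longrightarrow> override_on f g A = f"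
  by (auto simp: override_on_def fun_eq_iff)

lemma override_on_override_on: "override_on (override_on f g A) h A = override_on f h A"
  by (simp add: override_on_def fun_eq_iff)

lemma exec_override_on:
  "exec c \<sigma> \<sigma>' \<Longrightarrow> com_locs c \<subseteq> S \<Longrightarrow> (\<And>X. X \<in> S \<Longrightarrow> \<tau> X = \<sigma> X)
    \<Longrightarrow> exec c \<tau> (override_on \<tau> \<sigma>' S)"
proof (induction arbitrary: \<tau> rule: exec.induct)
  case (Skip \<sigma>)
  then show ?case
    by (simp add: override_on_self exec.Skip)
next
  case (Assign X a \<sigma>)
  then have "caval a \<tau> = caval a \<sigma>"
    by (intro caval_cong) auto
  with Assign have "override_on \<tau> (\<sigma>(X := caval a \<sigma>)) S = \<tau>(X := caval a \<tau>)"
    by (auto simp: override_on_def fun_eq_iff)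
  then show ?case
    by (metis exec.Assign)
next
  case (Seq c0 \<sigma> \<sigma>'' c1 \<sigma>')
  let ?\<tau>'' = "override_on \<tau> \<sigma>'' S"
  have "exec c0 \<tau> ?\<tau>''"
    using Seq.prems by (intro Seq.IH(1)) auto
  moreover have "exec c1 ?\<tau>'' (override_on ?\<tau>'' \<sigma>' S)"
    using Seq.prems by (intro Seq.IH(2)) auto
  ultimately show ?case
    unfolding override_on_override_on by (rule exec.Seq)
next
  case (IfT b \<sigma> c0 \<sigma>' c1)
  then have "cbval b \<tau>"
    using cbval_cong[of b \<tau> \<sigma>] by auto
  with IfT show ?case
    by (auto intro: exec.IfT)
next
  case (IfF b \<sigma> c1 \<sigma>' c0)
  then have "\<not> cbval b \<tau>"
    using cbval_cong[of b \<tau> \<sigma>] by auto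
  with IfF show ?case
    by (auto intro: exec.IfF)
next
  case (WhileF b \<sigma> c)
  then have "\<not> cbval b \<tau>"
    using cbval_cong[of b \<tau> \<sigma>] by auto
  with WhileF show ?case
    by (simp add: override_on_self exec.WhileF)
next
  case (WhileT b \<sigma> c \<sigma>'' \<sigma>')
  let ?\<tau>'' = "override_on \<tau> \<sigma>'' S"
  have "cbval b \<tau>"
    using WhileT cbval_cong[of b \<tau> \<sigma>] by auto
  moreover have "exec c \<tau> ?\<tau>''"
    using WhileT.prems by (intro WhileT.IH(1)) auto
  moreover have "exec (While b c) ?\<tau>'' (override_on ?\<tau>'' \<sigma>' S)"
    using WhileT.prems by (intro WhileT.IH(2)) auto
  ultimately show ?case
    unfolding override_on_override_on by (rule exec.WhileT)
next
  case (Par c0 \<sigma> \<sigma>'' c1 \<sigma>' \<sigma>''')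
  let ?\<tau>'' = "override_on \<tau> \<sigma>'' S" and ?\<tau>''' = "override_on \<tau> \<sigma>''' S"
  have "exec c0 \<tau> ?\<tau>''" "exec c1 \<tau> ?\<tau>'''"
    using Par.prems by (intro Par.IH(1,3); auto)+
  moreover have "exec c1 ?\<tau>'' (override_on ?\<tau>'' \<sigma>' S)" "exec c0 ?\<tau>''' (override_on ?\<tau>''' \<sigma>' S)"
    using Par.prems by (intro Par.IH(2,4); auto)+
  ultimately show ?case
    unfolding override_on_override_on by (intro exec.Par)
qed

definition tuple_state :: "loc list \<Rightarrow> (nat \<Rightarrow> int) \<Rightarrow> state" where
  "tuple_state V g = override_list (\<lambda>_. 0) V g"

text \<open>The input/output relation of \<open>c\<close> on the locations \<open>V\<close>, with all other locations
  fixed to \<open>0\<close>: entries \<open>0, \<dots>, length V - 1\<close> of \<open>g\<close> hold the initial values of \<open>V\<close>, the next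
  \<open>length V\<close> entries the final ones.\<close>

definition io_rel :: "loc list \<Rightarrow> com \<Rightarrow> (nat \<Rightarrow> int) \<Rightarrow> bool" where
  "io_rel V c g \<longleftrightarrow> exec c (tuple_state V g) (tuple_state V (\<lambda>i. g (length V + i)))"

lemma tuple_state_cong: "(\<And>i. i < length V \<Longrightarrow> g i = g' i) \<Longrightarrow> tuple_state V g = tuple_state V g'"
  unfolding tuple_state_def by (rule override_list_cong)

lemma tuple_state_prepend [simp]: "tuple_state V (prepend (length V) g h) = tuple_state V g"
  by (rule tuple_state_cong) simp

lemma io_rel_prepend: "io_rel V c (prepend (length V) g h) \<longleftrightarrow> exec c (tuple_state V g) (tuple_state V h)"
  by (simp add: io_rel_def)

lemma supported_tuple_state: "supported (length V) (\<lambda>g. F (tuple_state V g))"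
  unfolding supported_def by (metis tuple_state_cong)

lemma supported_io_rel: "supported (2 * length V) (io_rel V c)"
  unfolding supported_def io_rel_def
proof (intro allI impI)
  fix g g' :: "nat \<Rightarrow> int" assume "\<forall>i<2 * length V. g i = g' i"
  then have "tuple_state V g = tuple_state V g'"
    and "tuple_state V (\<lambda>i. g (length V + i)) = tuple_state V (\<lambda>i. g' (length V + i))"
    by (auto intro: tuple_state_cong)
  then show "exec c (tuple_state V g) (tuple_state V (\<lambda>i. g (length V + i)))
      = exec c (tuple_state V g') (tuple_state V (\<lambda>i. g' (length V + i)))"
    by simp
qed

lemma exec_tuple_state:
  assumes "exec c (tuple_state V g) \<sigma>'" "com_locs c \<subseteq> set V"
  shows "\<sigma>' = tuple_state V (\<lambda>i. \<sigma>' (V ! i))"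
proof -
  have "\<sigma>' X = 0" if "X \<notin> set V" for X
  proof -
    have "X \<notin> com_locs c"
      using that assms(2) by blast
    with that show ?thesis
      using exec_unchanged[OF assms(1)] by (simp add: tuple_state_def)
  qed
  then show ?thesis
    unfolding tuple_state_def by (simp add: override_list_nth_self)
qed

lemma tuple_state_nth [simp]: "distinct V \<Longrightarrow> i < length V \<Longrightarrow> tuple_state V g (V ! i) = g i"
  by (simp add: tuple_state_def)

lemma tuple_state_eq_iff:
  "distinct V \<Longrightarrow> tuple_state V g = tuple_state V g' \<longleftrightarrow> (\<forall>i<length V. g i = g' i)"
  unfolding tuple_state_def by (rule override_list_eq_iff)

lemma exec_Skip_iff: "exec Skip \<sigma> \<sigma>' \<longleftrightarrow> \<sigma>' = \<sigma>"
  by (auto elim: exec.cases intro: exec.Skip)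

lemma exec_Assign_iff: "exec (Assign X a) \<sigma> \<sigma>' \<longleftrightarrow> \<sigma>' = \<sigma>(X := caval a \<sigma>)"
  by (auto elim: exec.cases intro: exec.Assign)

lemma exec_Seq_iff: "exec (Seq c0 c1) \<sigma> \<sigma>' \<longleftrightarrow> (\<exists>\<sigma>''. exec c0 \<sigma> \<sigma>'' \<and> exec c1 \<sigma>'' \<sigma>')"
  by (auto elim: exec.cases intro: exec.Seq)

lemma exec_If_iff:
  "exec (If b c0 c1) \<sigma> \<sigma>' \<longleftrightarrow> (if cbval b \<sigma> then exec c0 \<sigma> \<sigma>' else exec c1 \<sigma> \<sigma>')"
  by (auto elim: exec.cases intro: exec.IfT exec.IfF)

lemma exec_Par_iff:
  "exec (Par c0 c1) \<sigma> \<sigma>' \<longleftrightarrow>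
    (\<exists>\<sigma>''. exec c0 \<sigma> \<sigma>'' \<and> exec c1 \<sigma>'' \<sigma>') \<and> (\<exists>\<sigma>''. exec c1 \<sigma> \<sigma>'' \<and> exec c0 \<sigma>'' \<sigma>')"
  by (auto elim: exec.cases intro: exec.Par)

lemma exec_While_iff:
  "exec (While b c) \<sigma> \<sigma>' \<longleftrightarrow> (\<lambda>s t. cbval b s \<and> exec c s t)\<^sup>*\<^sup>* \<sigma> \<sigma>' \<and> \<not> cbval b \<sigma>'"
proof
  have "exec w \<sigma> \<sigma>' \<Longrightarrow> w = While b c \<Longrightarrow> (\<lambda>s t. cbval b s \<and> exec c s t)\<^sup>*\<^sup>* \<sigma> \<sigma>' \<and> \<not> cbval b \<sigma>'"
    for w by (induction rule: exec.induct) (auto intro: converse_rtranclp_into_rtranclp)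
  then show "exec (While b c) \<sigma> \<sigma>' \<Longrightarrow> (\<lambda>s t. cbval b s \<and> exec c s t)\<^sup>*\<^sup>* \<sigma> \<sigma>' \<and> \<not> cbval b \<sigma>'"
    by blast
next
  assume "(\<lambda>s t. cbval b s \<and> exec c s t)\<^sup>*\<^sup>* \<sigma> \<sigma>' \<and> \<not> cbval b \<sigma>'"
  then have "(\<lambda>s t. cbval b s \<and> exec c s t)\<^sup>*\<^sup>* \<sigma> \<sigma>'" and "\<not> cbval b \<sigma>'"
    by blast+
  then show "exec (While b c) \<sigma> \<sigma>'"
    by (induction rule: converse_rtranclp_induct) (auto intro: exec.WhileF exec.WhileT)
qed

lemma io_rel_Skip:
  assumes "distinct V"
  shows "io_rel V Skip g \<longleftrightarrow> (\<forall>i<length V. g (length V + i) = g i)"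
  unfolding io_rel_def exec_Skip_iff tuple_state_eq_iff[OF assms] ..

lemma io_rel_Assign:
  assumes "distinct V" "X \<in> set V"
  shows "io_rel V (Assign X a) g \<longleftrightarrow>
    (\<forall>i<length V. g (length V + i) = (if V ! i = X then caval a (tuple_state V g) else g i))"
proof -
  have "(tuple_state V g)(X := v) = tuple_state V (\<lambda>i. if V ! i = X then v else g i)" for v
    using assms by (auto simp: tuple_state_def override_list_def fun_eq_iff nth_index)
  then show ?thesis
    unfolding io_rel_def exec_Assign_iff using assms(1) by (simp add: tuple_state_eq_iff)
qed

lemma io_rel_If:
  "io_rel V (If b c0 c1) g \<longleftrightarrow>
    (if cbval b (tuple_state V g) then io_rel V c0 g else io_rel V c1 g)"
  unfolding io_rel_def exec_If_iff ..

lemma tuple_relcomp_io_rel: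
  assumes "distinct V" "com_locs c0 \<subseteq> set V"
  shows "tuple_relcomp (length V) (io_rel V c0) (io_rel V c1) g \<longleftrightarrow>
    (\<exists>\<sigma>''. exec c0 (tuple_state V g) \<sigma>'' \<and> exec c1 \<sigma>'' (tuple_state V (\<lambda>i. g (length V + i))))"
  unfolding tuple_relcomp_def io_rel_prepend
  using exec_tuple_state[OF _ assms(2)] by metis

lemma io_rel_Seq:
  "distinct V \<Longrightarrow> com_locs c0 \<subseteq> set V \<Longrightarrow>
    io_rel V (Seq c0 c1) g \<longleftrightarrow> tuple_relcomp (length V) (io_rel V c0) (io_rel V c1) g"
  unfolding tuple_relcomp_io_rel io_rel_def exec_Seq_iff ..

lemma io_rel_Par:
  "distinct V \<Longrightarrow> com_locs c0 \<subseteq> set V \<Longrightarrow> com_locs c1 \<subseteq> set V \<Longrightarrow>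
    io_rel V (Par c0 c1) g \<longleftrightarrow> tuple_relcomp (length V) (io_rel V c0) (io_rel V c1) g
      \<and> tuple_relcomp (length V) (io_rel V c1) (io_rel V c0) g"
  unfolding tuple_relcomp_io_rel io_rel_def exec_Par_iff ..

lemma exec_chain_tuple_state:
  assumes "f 0 = tuple_state V g" "\<forall>i<n. exec c (f i) (f (Suc i))" "com_locs c \<subseteq> set V"
    and "i \<le> n"
  shows "f i = tuple_state V (\<lambda>j. f i (V ! j))"
  using assms(4)
proof (induction i)
  case 0
  show ?case
    unfolding assms(1) tuple_state_def by (simp add: override_list_nth_self)
next
  case (Suc i)
  have step: "exec c (f i) (f (Suc i))"
    using assms(2) Suc.prems by simp
  have "f i = tuple_state V (\<lambda>j. f i (V ! j))"
    using Suc.prems by (intro Suc.IH) simp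
  with step have "exec c (tuple_state V (\<lambda>j. f i (V ! j))) (f (Suc i))"
    by metis
  then show ?case
    using assms(3) by (rule exec_tuple_state)
qed

lemma rtranclp_exec_iff_tuple_rtrancl:
  assumes V: "distinct V" "com_locs c \<subseteq> set V"
  shows "(\<lambda>s t. cbval b s \<and> exec c s t)\<^sup>*\<^sup>* (tuple_state V g) (tuple_state V (\<lambda>i. g (length V + i)))
    \<longleftrightarrow> tuple_rtrancl (length V) (\<lambda>G. cbval b (tuple_state V G) \<and> io_rel V c G) g"
    (is "?T\<^sup>*\<^sup>* _ _ \<longleftrightarrow> tuple_rtrancl ?k ?R g")
proof
  assume "?T\<^sup>*\<^sup>* (tuple_state V g) (tuple_state V (\<lambda>i. g (?k + i)))"
  then obtain n f where f: "f 0 = tuple_state V g" "f n = tuple_state V (\<lambda>i. g (?k + i))"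
    "\<forall>i<n. ?T (f i) (f (Suc i))"
    unfolding rtranclp_power relpowp_fun_conv by blast
  define x where "x i j = f i (V ! j)" for i j
  have steps: "\<forall>i<n. exec c (f i) (f (Suc i))"
    using f(3) by blast
  have fx: "f i = tuple_state V (x i)" if "i \<le> n" for i
    unfolding x_def using f(1) steps V(2) that by (rule exec_chain_tuple_state)
  have "\<forall>j<?k. x 0 j = g j \<and> x n j = g (?k + j)"
    using f(1,2) V(1) by (simp add: x_def)
  moreover have "\<forall>i<n. ?R (prepend ?k (x i) (x (Suc i)))"
    using f(3) fx by (simp add: io_rel_prepend)
  ultimately show "tuple_rtrancl ?k ?R g"
    unfolding tuple_rtrancl_def by blast
next
  assume "tuple_rtrancl ?k ?R g"
  then obtain n x where x: "\<forall>j<?k. x 0 j = g j \<and> x n j = g (?k + j)"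
    "\<forall>i<n. ?R (prepend ?k (x i) (x (Suc i)))"
    unfolding tuple_rtrancl_def by blast
  have "tuple_state V (x 0) = tuple_state V g" "tuple_state V (x n) = tuple_state V (\<lambda>i. g (?k + i))"
    using x(1) by (auto intro: tuple_state_cong)
  moreover have "\<forall>i<n. ?T (tuple_state V (x i)) (tuple_state V (x (Suc i)))"
    using x(2) by (simp add: io_rel_prepend)
  then have "(?T ^^ n) (tuple_state V (x 0)) (tuple_state V (x n))"
    unfolding relpowp_fun_conv by (intro exI[of _ "\<lambda>i. tuple_state V (x i)"]) simp
  ultimately show "?T\<^sup>*\<^sup>* (tuple_state V g) (tuple_state V (\<lambda>i. g (?k + i)))"
    by (metis rtranclp_power)
qed

lemma io_rel_While:
  assumes "distinct V" "com_locs c \<subseteq> set V"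
  shows "io_rel V (While b c) g \<longleftrightarrow>
    tuple_rtrancl (length V) (\<lambda>G. cbval b (tuple_state V G) \<and> io_rel V c G) g
      \<and> \<not> cbval b (tuple_state V (\<lambda>i. g (length V + i)))"
  using rtranclp_exec_iff_tuple_rtrancl[OF assms, of b g]
  by (simp only: io_rel_def[of V "While b c"] exec_While_iff)

lemma poly_fun_caval:
  assumes "caexp_locs a \<subseteq> set V" "\<And>i. poly_fun (F i)"
  shows "poly_fun (\<lambda>f. caval a (tuple_state V (\<lambda>i. F i f)))"
  using assms(1)
proof (induction a)
  case (CL X)
  then show ?case
    by (simp add: tuple_state_def override_list_def assms(2))
qed (auto intro: poly_fun.intros)

lemma definable_cbval:
  assumes "cbexp_locs b \<subseteq> set V" "\<And>i. poly_fun (F i)"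
  shows "definable (\<lambda>f. cbval b (tuple_state V (\<lambda>i. F i f)))"
  using assms(1)
proof (induction b)
  case (CEq a0 a1)
  then show ?case
    by (simp add: definable_eq poly_fun_caval assms(2))
next
  case (CLe a0 a1)
  then show ?case
    by (simp add: definable_le poly_fun_caval assms(2))
qed (simp_all add: definable_const definable_not definable_conj definable_disj)

lemma definable_io_rel: "distinct V \<Longrightarrow> com_locs c \<subseteq> set V \<Longrightarrow> definable (io_rel V c)"
proof (induction c)
  case Skip
  show ?case
    unfolding io_rel_Skip[OF Skip.prems(1)] by (intro definable_ball definable_eq poly_fun_var)
next
  case (Assign X a)
  have "poly_fun (\<lambda>g. caval a (tuple_state V (\<lambda>i. g i)))"
    using Assign.prems(2) by (intro poly_fun_caval poly_fun_var) simp
  then have "definable (\<lambda>g. g (length V + i) = (if V ! i = X then caval a (tuple_state V g) else g i))"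
    for i by (cases "V ! i = X") (simp_all add: definable_eq poly_fun_var)
  then show ?case
    using Assign.prems by (simp add: io_rel_Assign definable_ball)
next
  case (Seq c0 c1)
  then show ?case
    by (simp add: io_rel_Seq definable_tuple_relcomp supported_io_rel)
next
  case (If b c0 c1)
  have "definable (\<lambda>g. cbval b (tuple_state V (\<lambda>i. g i)))"
    using If.prems(2) by (intro definable_cbval poly_fun_var) simp
  with If show ?case
    by (simp add: io_rel_If definable_if)
next
  case (While b c)
  have "definable (\<lambda>g. cbval b (tuple_state V (\<lambda>i. g i)))"
    and "definable (\<lambda>g. cbval b (tuple_state V (\<lambda>i. g (length V + i))))"
    using While.prems(2) by (intro definable_cbval poly_fun_var; simp)+
  moreover have "supported (2 * length V) (\<lambda>G. cbval b (tuple_state V G) \<and> io_rel V c G)"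
    using supported_combine[OF supported_tuple_state[of V "cbval b"] supported_io_rel[of V c],
        where h = "(\<and>)"]
    by (simp add: max_def)
  ultimately show ?case
    using While by (simp add: io_rel_While definable_tuple_rtrancl definable_conj definable_not)
next
  case (Par c0 c1)
  then show ?case
    by (simp add: io_rel_Par definable_conj definable_tuple_relcomp supported_io_rel)
qed

section \<open>Weakest preconditions\<close>

lemma override_list_override_list: "override_list (override_list f xs g) xs h = override_list f xs h"
  by (simp add: override_list_def fun_eq_iff)

lemma override_list_Cons:
  "x \<notin> set xs \<Longrightarrow> override_list f (x # xs) h = override_list (f(x := h 0)) xs (\<lambda>i. h (Suc i))"
  by (auto simp: override_list_def fun_eq_iff)

lemma tuple_state_agrees: "X \<in> set V \<Longrightarrow> tuple_state V (\<lambda>i. \<sigma> (V ! i)) X = \<sigma> X"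
  by (simp add: tuple_state_def override_list_def nth_index)

lemma exec_imp_exec_tuple_state:
  assumes exec: "exec c \<sigma> \<sigma>'" and V: "com_locs c \<subseteq> set V"
  shows "\<sigma>' = override_list \<sigma> V (\<lambda>i. \<sigma>' (V ! i))"
    and "exec c (tuple_state V (\<lambda>i. \<sigma> (V ! i))) (tuple_state V (\<lambda>i. \<sigma>' (V ! i)))"
proof -
  have "\<sigma>' X = \<sigma> X" if "X \<notin> set V" for X
    using exec_unchanged[OF exec] that V by blast
  then show "\<sigma>' = override_list \<sigma> V (\<lambda>i. \<sigma>' (V ! i))"
    by (simp add: override_list_nth_self)
  have "exec c (tuple_state V (\<lambda>i. \<sigma> (V ! i))) (override_on (tuple_state V (\<lambda>i. \<sigma> (V ! i))) \<sigma>' (set V))"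
    using exec V tuple_state_agrees by (rule exec_override_on)
  then show "exec c (tuple_state V (\<lambda>i. \<sigma> (V ! i))) (tuple_state V (\<lambda>i. \<sigma>' (V ! i)))"
    by (simp add: override_on_eq_override_list tuple_state_def override_list_override_list)
qed

lemma exec_tuple_state_imp_exec:
  assumes exec: "exec c (tuple_state V (\<lambda>i. \<sigma> (V ! i))) (tuple_state V h)"
    and V: "distinct V" "com_locs c \<subseteq> set V"
  shows "exec c \<sigma> (override_list \<sigma> V h)"
proof -
  have "exec c \<sigma> (override_on \<sigma> (tuple_state V h) (set V))"
    using exec V(2) by (rule exec_override_on) (simp add: tuple_state_agrees)
  moreover have "override_on \<sigma> (tuple_state V h) (set V) = override_list \<sigma> V h"
    unfolding override_on_eq_override_list using V(1) by (intro override_list_cong) simp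
  ultimately show ?thesis
    by simp
qed

fun assn_vars :: "assn \<Rightarrow> intvar set" where
  "assn_vars ATrue = {}"
| "assn_vars AFalse = {}"
| "assn_vars (AEq a b) = aexp_vars a \<union> aexp_vars b"
| "assn_vars (ALe a b) = aexp_vars a \<union> aexp_vars b"
| "assn_vars (ANot A) = assn_vars A"
| "assn_vars (AAnd A B) = assn_vars A \<union> assn_vars B"
| "assn_vars (AOr A B) = assn_vars A \<union> assn_vars B"
| "assn_vars (AImp A B) = assn_vars A \<union> assn_vars B"
| "assn_vars (AForall x A) = insert x (assn_vars A)"
| "assn_vars (AExists x A) = insert x (assn_vars A)"

lemma finite_assn_vars: "finite (assn_vars A)"
  by (induction A) auto

lemma sat_cong_interp: "(\<And>x. x \<in> assn_vars A \<Longrightarrow> I x = J x) \<Longrightarrow> sat \<sigma> I A = sat \<sigma> J A"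
proof (induction A arbitrary: I J)
  case (AEq a b)
  then show ?case
    using aval_cong_interp[of a I J] aval_cong_interp[of b I J] by simp
next
  case (ALe a b)
  then show ?case
    using aval_cong_interp[of a I J] aval_cong_interp[of b I J] by simp
next
  case (ANot A)
  have "sat \<sigma> I A = sat \<sigma> J A"
    using ANot.prems by (intro ANot.IH) auto
  then show ?case
    by simp
next
  case (AAnd A B)
  have "sat \<sigma> I A = sat \<sigma> J A" "sat \<sigma> I B = sat \<sigma> J B"
    using AAnd.prems by (intro AAnd.IH; auto)+
  then show ?case
    by simp
next
  case (AOr A B)
  have "sat \<sigma> I A = sat \<sigma> J A" "sat \<sigma> I B = sat \<sigma> J B"
    using AOr.prems by (intro AOr.IH; auto)+
  then show ?case
    by simp
next
  case (AImp A B)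
  have "sat \<sigma> I A = sat \<sigma> J A" "sat \<sigma> I B = sat \<sigma> J B"
    using AImp.prems by (intro AImp.IH; auto)+
  then show ?case
    by simp
next
  case (AForall x A)
  have "sat \<sigma> (I(x := n)) A = sat \<sigma> (J(x := n)) A" for n
    using AForall.prems by (intro AForall.IH) auto
  then show ?case
    by simp
next
  case (AExists x A)
  have "sat \<sigma> (I(x := n)) A = sat \<sigma> (J(x := n)) A" for n
    using AExists.prems by (intro AExists.IH) auto
  then show ?case
    by simp
qed simp_all

fun subst_locs_aexp :: "loc list \<Rightarrow> intvar list \<Rightarrow> aexp \<Rightarrow> aexp" where
  "subst_locs_aexp V xs (N n) = N n"
| "subst_locs_aexp V xs (L X) = (if X \<in> set V then IV (xs ! index V X) else L X)"
| "subst_locs_aexp V xs (IV i) = IV i"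
| "subst_locs_aexp V xs (Plus a b) = Plus (subst_locs_aexp V xs a) (subst_locs_aexp V xs b)"
| "subst_locs_aexp V xs (Minus a b) = Minus (subst_locs_aexp V xs a) (subst_locs_aexp V xs b)"
| "subst_locs_aexp V xs (Times a b) = Times (subst_locs_aexp V xs a) (subst_locs_aexp V xs b)"

fun subst_locs :: "loc list \<Rightarrow> intvar list \<Rightarrow> assn \<Rightarrow> assn" where
  "subst_locs V xs ATrue = ATrue"
| "subst_locs V xs AFalse = AFalse"
| "subst_locs V xs (AEq a b) = AEq (subst_locs_aexp V xs a) (subst_locs_aexp V xs b)"
| "subst_locs V xs (ALe a b) = ALe (subst_locs_aexp V xs a) (subst_locs_aexp V xs b)"
| "subst_locs V xs (ANot A) = ANot (subst_locs V xs A)"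
| "subst_locs V xs (AAnd A B) = AAnd (subst_locs V xs A) (subst_locs V xs B)"
| "subst_locs V xs (AOr A B) = AOr (subst_locs V xs A) (subst_locs V xs B)"
| "subst_locs V xs (AImp A B) = AImp (subst_locs V xs A) (subst_locs V xs B)"
| "subst_locs V xs (AForall x A) = AForall x (subst_locs V xs A)"
| "subst_locs V xs (AExists x A) = AExists x (subst_locs V xs A)"

lemma aval_subst_locs_aexp:
  "aval (subst_locs_aexp V xs a) \<sigma> I = aval a (override_list \<sigma> V (\<lambda>i. I (xs ! i))) I"
  by (induction a) (auto simp: override_list_def)

lemma sat_subst_locs:
  assumes "length xs = length V" "set xs \<inter> assn_vars A = {}"
  shows "sat \<sigma> I (subst_locs V xs A) = sat (override_list \<sigma> V (\<lambda>i. I (xs ! i))) I A"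
  using assms(2)
proof (induction A arbitrary: I)
  case (AForall x A)
  have fresh: "set xs \<inter> assn_vars A = {}"
    using AForall.prems by auto
  have "override_list \<sigma> V (\<lambda>i. (I(x := n)) (xs ! i)) = override_list \<sigma> V (\<lambda>i. I (xs ! i))" for n
    using AForall.prems assms(1) by (intro override_list_cong) (auto simp: nth_mem)
  then have "sat \<sigma> (I(x := n)) (subst_locs V xs A)
      = sat (override_list \<sigma> V (\<lambda>i. I (xs ! i))) (I(x := n)) A" for n
    unfolding AForall.IH[OF fresh] by (rule arg_cong)
  then show ?case
    by simp
next
  case (AExists x A)
  have fresh: "set xs \<inter> assn_vars A = {}"
    using AExists.prems by auto
  have "override_list \<sigma> V (\<lambda>i. (I(x := n)) (xs ! i)) = override_list \<sigma> V (\<lambda>i. I (xs ! i))" for n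
    using AExists.prems assms(1) by (intro override_list_cong) (auto simp: nth_mem)
  then have "sat \<sigma> (I(x := n)) (subst_locs V xs A)
      = sat (override_list \<sigma> V (\<lambda>i. I (xs ! i))) (I(x := n)) A" for n
    unfolding AExists.IH[OF fresh] by (rule arg_cong)
  then show ?case
    by simp
qed (simp_all add: aval_subst_locs_aexp Int_Un_distrib)

lemma sat_foldr_AForall:
  "distinct xs \<Longrightarrow> sat \<sigma> I (foldr AForall xs A) \<longleftrightarrow> (\<forall>h. sat \<sigma> (override_list I xs h) A)"
proof (induction xs arbitrary: I)
  case Nil
  then show ?case
    by (simp add: override_list_def)
next
  case (Cons x xs)
  then have "sat \<sigma> I (foldr AForall (x # xs) A) \<longleftrightarrow>
      (\<forall>a h. sat \<sigma> (override_list (I(x := a)) xs h) A)"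
    by simp
  also have "\<dots> \<longleftrightarrow> (\<forall>h. sat \<sigma> (override_list (I(x := h 0)) xs (\<lambda>i. h (Suc i))) A)"
  proof
    assume H: "\<forall>h. sat \<sigma> (override_list (I(x := h 0)) xs (\<lambda>i. h (Suc i))) A"
    show "\<forall>a h. sat \<sigma> (override_list (I(x := a)) xs h) A"
    proof (intro allI)
      fix a h
      from H[rule_format, of "case_nat a h"] show "sat \<sigma> (override_list (I(x := a)) xs h) A"
        by simp
    qed
  qed blast
  finally show ?case
    using Cons.prems by (simp add: override_list_Cons)
qed

lemma ex_fresh_distinct_list:
  assumes "finite (S :: intvar set)"
  shows "\<exists>xs. distinct xs \<and> length xs = n \<and> set xs \<inter> S = {}"
proof -
  have "infinite (UNIV - S)"
    using assms infinite_UNIV_listI by (rule Diff_infinite_finite)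
  then obtain T where T: "T \<subseteq> UNIV - S" "finite T" "card T = n"
    using infinite_arbitrarily_large by blast
  then obtain xs where "set xs = T" "distinct xs"
    using finite_distinct_list by blast
  with T show ?thesis
    by (intro exI[of _ xs]) (auto simp: distinct_card)
qed

theorem expressible_wp: "expressible (\<lambda>\<sigma> I. \<sigma> \<in> wp I c B)"
proof -
  obtain V where V: "set V = com_locs c" "distinct V"
    using finite_distinct_list[OF finite_com_locs] by blast
  let ?k = "length V"
  obtain xs where xs: "distinct xs" "length xs = ?k" "set xs \<inter> assn_vars B = {}"
    using ex_fresh_distinct_list[OF finite_assn_vars] by blast
  define \<rho> where "\<rho> i = (if i < ?k then L (V ! i) else IV (xs ! (i - ?k)))" for i
  have locs: "com_locs c \<subseteq> set V"
    using V(1) by simp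
  have "definable (io_rel V c)"
    using V(2) locs by (rule definable_io_rel)
  then obtain A where A: "\<forall>\<sigma> I. sat \<sigma> I A = io_rel V c (\<lambda>i. aval (\<rho> i) \<sigma> I)"
    unfolding definable_def expressible_def by blast
  define w where "w = foldr AForall xs (AImp A (subst_locs V xs B))"
  have "sat \<sigma> I w \<longleftrightarrow> (\<forall>\<sigma>'. exec c \<sigma> \<sigma>' \<longrightarrow> sat \<sigma>' I B)" for \<sigma> I
  proof -
    have "io_rel V c (\<lambda>i. aval (\<rho> i) \<sigma> (override_list I xs h))
        = io_rel V c (prepend ?k (\<lambda>i. \<sigma> (V ! i)) h)" for h
      using xs(1,2) by (intro supportedD[OF supported_io_rel]) (auto simp: \<rho>_def prepend_def)
    moreover have "sat \<sigma> (override_list I xs h) (subst_locs V xs B) = sat (override_list \<sigma> V h) I B"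
      for h
    proof -
      have "override_list \<sigma> V (\<lambda>i. override_list I xs h (xs ! i)) = override_list \<sigma> V h"
        using xs(1,2) by (intro override_list_cong) simp
      moreover have "sat \<tau> (override_list I xs h) B = sat \<tau> I B" for \<tau>
        using xs(3) by (intro sat_cong_interp override_list_notin) blast
      ultimately show ?thesis
        using xs(2,3) by (simp add: sat_subst_locs)
    qed
    ultimately have "sat \<sigma> I w \<longleftrightarrow>
        (\<forall>h. exec c (tuple_state V (\<lambda>i. \<sigma> (V ! i))) (tuple_state V h) \<longrightarrow> sat (override_list \<sigma> V h) I B)"
      unfolding w_def using xs(1) A by (simp add: sat_foldr_AForall io_rel_prepend)
    also have "\<dots> \<longleftrightarrow> (\<forall>\<sigma>'. exec c \<sigma> \<sigma>' \<longrightarrow> sat \<sigma>' I B)"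
      using exec_imp_exec_tuple_state[OF _ locs] exec_tuple_state_imp_exec[OF _ V(2) locs]
      by metis
    finally show ?thesis .
  qed
  then show ?thesis
    unfolding expressible_def wp_def by (intro exI[of _ w]) simp
qed

theorem mainTheorem6:
  shows "\<forall>c B. \<exists>w. \<forall>I. {\<sigma>. sat \<sigma> I w} = wp I c B"
proof (intro allI)
  fix c B
  obtain w where "\<forall>\<sigma> I. sat \<sigma> I w = (\<sigma> \<in> wp I c B)"
    using expressible_wp[of c B] unfolding expressible_def by blast
  then show "\<exists>w. \<forall>I. {\<sigma>. sat \<sigma> I w} = wp I c B"
    by auto
qed

end
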